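(* Let $p$ be a well-formed cons-free program, and suppose $[\![p]\!](d_1,\dots,d_M)\mapsto b$ is obtained by a derivation tree $T$. Then for every judgement in $T$ of one of the forms $p,\gamma\vdash s\to w$, $p,\gamma\vdash^{\mathrm{if}} b',s_1,s_2\to w$, or $p\vdash^{\mathrm{call}} f\,v_1\cdots v_n\to w$, and for every expression $t$ such that (a) $w\unrhd t$, (b) $b'\unrhd t$, (c) $\gamma(x)\unrhd t$ for some variable $x$, or (d) $v_i\unrhd t$ for some $i$: if $t$ has the form $c\,b_1\cdots b_m$ with $c\in\mathcal{C}$, then $t\in\mathcal{B}^p_{d_1,\dots,d_M}$.
   Context: Types are built from a finite set $\mathcal{S}$ of sorts (containing $\mathsf{bool}$) by $\sigma ::= \iota \mid \sigma \times \tau \mid \sigma \Rightarrow \tau$, with $\Rightarrow$ right-associative. Type order: $\mathrm{ord}(\iota)=0$ for sorts, $\mathrm{ord}(\sigma\times\tau)=\max(\mathrm{ord}(\sigma),\mathrm{ord}(\tau))$, $\mathrm{ord}(\sigma\Rightarrow\tau)=\max(\mathrm{ord}(\sigma)+1,\mathrm{ord}(\tau))$. Write $\kappa$ for a type that is a sort or a product; every type is uniquely $\sigma_1\Rightarrow\cdots\Rightarrow\sigma_m\Rightarrow\kappa$. Syntax. Fix pairwise disjoint sets of variables, data constructors $\mathcal{C}$ (containing $\mathsf{true},\mathsf{false}$) and defined symbols $\mathcal{D}$. Patterns: $\ell ::= x \mid c\,\ell_1\cdots\ell_m$ ($c\in\mathcal{C}$). Expressions: $s ::= x \mid c \mid f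 \mid \mathsf{if}\ s_1\ \mathsf{then}\ s_2\ \mathsf{else}\ s_3 \mid \mathsf{choose}\ s_1\cdots s_n \mid (s,t) \mid s\,t$ (application left-associative). A program is a finite list of clauses $f\,\ell_1\cdots\ell_k = s$ with $f \in \mathcal{D}$; its main function $f_1$ is the defined symbol of the first clause. Sub-expressions: $s \unrhd t$ iff $s = t$ or $s \rhd t$, where $(s_1,s_2)\rhd t$, $\mathsf{if}\ s_1\ \mathsf{then}\ s_2\ \mathsf{else}\ s_3 \rhd t$ and $\mathsf{choose}\ s_1\cdots s_n\rhd t$ hold if $s_i \unrhd t$ for some $i$, and $s_1\,s_2 \rhd t$ holds if $s_1 \rhd t$ or $s_2 \unrhd t$. Typing. A program is well-typed if there is an assignment $\mathcal{F}$ of simple types to $\mathcal{C}\cup\mathcal{D}$ such that: $f_1 : \kappa_1\Rightarrow\cdots\Rightarrow\kappa_M\Rightarrow\kappa$ with all $\kappa_i,\kappa$ of order $0$; each $c\in\mathcal{C}$ has type $\kappa_1\Rightarrow\cdots\Rightarrow\kappa_m\Rightarrow\iota$ with $\iota$ a sort and all $\kappa_i$ of order $0$; and for every clause $f\,\ell_1\cdots\ell_k=s$, all variables of $s$ occur in the left-hand side, each variable occurs at most once in the left-hand side, and there is a type environment $\Gamma$ for the left-hand side variables under which both sides have the same type (standard simple typing). It is well-formed if moreover constructors always occur fully applied and all clauses with the same root $f$ have the same number $\mathrm{arity}(f)$ of arguments. Semantics. Data expressions $d ::= c\,d_1\cdots d_m \mid (d,d')$; values $v ::= d \mid (v,w)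 \mid f\,v_1\cdots v_n$ with $n<\mathrm{arity}(f)$; environments $\gamma$ map variables to values and $\ell\gamma$ is instantiation. Judgements $p,\gamma\vdash s\to w$, $p,\gamma\vdash^{\mathrm{if}} d,s_2,s_3\to w$ and $p\vdash^{\mathrm{call}} f\,v_1\cdots v_n\to w$ are derived by: $p,\gamma\vdash x\to\gamma(x)$; $p,\gamma\vdash f\to w$ if $p\vdash^{\mathrm{call}} f\to w$; $p,\gamma\vdash c\,s_1\cdots s_m\to c\,b_1\cdots b_m$ if $p,\gamma\vdash s_i\to b_i$ for all $i$; $p,\gamma\vdash(s,t)\to(v,w)$ if $p,\gamma\vdash s\to v$ and $p,\gamma\vdash t\to w$; $p,\gamma\vdash \mathsf{choose}\ s_1\cdots s_n\to w$ if $p,\gamma\vdash s_i\to w$ for some $i$; $p,\gamma\vdash\mathsf{if}\ s_1\ \mathsf{then}\ s_2\ \mathsf{else}\ s_3\to w$ if $p,\gamma\vdash s_1\to d$ and $p,\gamma\vdash^{\mathrm{if}} d,s_2,s_3\to w$, where $p,\gamma\vdash^{\mathrm{if}}\mathsf{true},s_2,s_3\to w$ if $p,\gamma\vdash s_2\to w$ and $p,\gamma\vdash^{\mathrm{if}}\mathsf{false},s_2,s_3\to w$ if $p,\gamma\vdash s_3\to w$; $p,\gamma\vdash s\,t\to w$ if $p,\gamma\vdash s\to f\,v_1\cdots v_n$, $p,\gamma\vdash t\to v_{n+1}$ and $p\vdash^{\mathrm{call}} f\,v_1\cdots v_{n+1}\to w$; $p\vdash^{\mathrm{call}} f\,v_1\cdots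 v_n\to f\,v_1\cdots v_n$ if $n<\mathrm{arity}(f)$; $p\vdash^{\mathrm{call}} f\,v_1\cdots v_k\to w$ if $p,\gamma\vdash s\to w$ where $f\,\ell_1\cdots\ell_k=s$ is the first clause of $p$ for which there is $\gamma$ with domain the left-hand side variables and $v_i=\ell_i\gamma$ for all $i$. Finally $[\![p]\!](d_1,\dots,d_M)\mapsto b$ holds iff there is a derivation tree (built with these rules) for $p,[x_1:=d_1,\dots,x_M:=d_M]\vdash f_1\,x_1\cdots x_M\to b$. Cons-freeness. A clause $f\,\ell_1\cdots\ell_k=s$ is cons-free if every $t$ with $s\unrhd t$ of the form $c\,s_1\cdots s_m$ with $c\in\mathcal{C}$ is a data expression or satisfies $\ell_i\unrhd t$ for some $i$; a program is cons-free if all its clauses are. $\mathcal{B}^p_{d_1,\dots,d_M}$ denotes the set of data expressions $d$ such that $d_i\unrhd d$ for some $i$, or $s\unrhd d$ for the right-hand side $s$ of some clause of $p$. *)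

theory Defs
  imports Main
begin

datatype 's ty = TBool | TSort 's | TProd "'s ty" "'s ty" | TArr "'s ty" "'s ty"

fun ty_over :: "'s set \<Rightarrow> 's ty \<Rightarrow> bool" where
  "ty_over S TBool = True"
| "ty_over S (TSort s) = (s \<in> S)"
| "ty_over S (TProd a b) = (ty_over S a \<and> ty_over S b)"
| "ty_over S (TArr a b) = (ty_over S a \<and> ty_over S b)"

fun ord :: "'s ty \<Rightarrow> nat" where
  "ord TBool = 0"
| "ord (TSort s) = 0"
| "ord (TProd a b) = max (ord a) (ord b)"
| "ord (TArr a b) = max (ord a + 1) (ord b)"

fun strip_arr :: "'s ty \<Rightarrow> 's ty list \<times> 's ty" where
  "strip_arr (TArr a b) = (let (as, r) = strip_arr b in (a # as, r))"
| "strip_arr t = ([], t)"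

fun is_sort :: "'s ty \<Rightarrow> bool" where
  "is_sort TBool = True"
| "is_sort (TSort s) = True"
| "is_sort _ = False"

datatype 'c cname = CTrue | CFalse | CName 'c

datatype ('v, 'c, 'f) expr =
    EVar 'v
  | ECon "'c cname"
  | EFun 'f
  | EIf "('v, 'c, 'f) expr" "('v, 'c, 'f) expr" "('v, 'c, 'f) expr"
  | EChoose "('v, 'c, 'f) expr list"
  | EPair "('v, 'c, 'f) expr" "('v, 'c, 'f) expr"
  | EApp "('v, 'c, 'f) expr" "('v, 'c, 'f) expr"

definition apps :: "('v, 'c, 'f) expr \<Rightarrow> ('v, 'c, 'f) expr list \<Rightarrow> ('v, 'c, 'f) expr" where
  "apps h xs = foldl EApp h xs"

text \<open>Proper sub-expression relation (s \<rhd> t) as in the paper; note that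
  for applications only the argument and the proper sub-expressions of the
  head count.\<close>
fun psub :: "('v, 'c, 'f) expr \<Rightarrow> ('v, 'c, 'f) expr \<Rightarrow> bool" where
  "psub (EPair a b) t = (a = t \<or> psub a t \<or> b = t \<or> psub b t)"
| "psub (EIf a b c) t = (a = t \<or> psub a t \<or> b = t \<or> psub b t \<or> c = t \<or> psub c t)"
| "psub (EChoose ss) t = (\<exists>s\<in>set ss. s = t \<or> psub s t)"
| "psub (EApp a b) t = (psub a t \<or> b = t \<or> psub b t)"
| "psub (EVar x) t = False"
| "psub (ECon c) t = False"
| "psub (EFun f) t = False"

definition sube :: "('v, 'c, 'f) expr \<Rightarrow> ('v, 'c, 'f) expr \<Rightarrow> bool" where
  "sube s t = (s = t \<or> psub s t)"

inductive is_data :: "('v, 'c, 'f) expr \<Rightarrow> bool" where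
  data_con: "\<forall>d\<in>set ds. is_data d \<Longrightarrow> is_data (apps (ECon c) ds)"
| data_pair: "is_data a \<Longrightarrow> is_data b \<Longrightarrow> is_data (EPair a b)"

inductive is_pattern :: "('v, 'c, 'f) expr \<Rightarrow> bool" where
  pat_var: "is_pattern (EVar x)"
| pat_con: "\<forall>l\<in>set ls. is_pattern l \<Longrightarrow> is_pattern (apps (ECon c) ls)"

fun varlist :: "('v, 'c, 'f) expr \<Rightarrow> 'v list" where
  "varlist (EVar x) = [x]"
| "varlist (ECon c) = []"
| "varlist (EFun f) = []"
| "varlist (EIf a b c) = varlist a @ varlist b @ varlist c"
| "varlist (EChoose ss) = concat (map varlist ss)"
| "varlist (EPair a b) = varlist a @ varlist b"
| "varlist (EApp a b) = varlist a @ varlist b"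

type_synonym ('v, 'c, 'f) env = "'v \<Rightarrow> ('v, 'c, 'f) expr option"

fun inst :: "('v, 'c, 'f) env \<Rightarrow> ('v, 'c, 'f) expr \<Rightarrow> ('v, 'c, 'f) expr" where
  "inst \<gamma> (EVar x) = (case \<gamma> x of Some v \<Rightarrow> v | None \<Rightarrow> EVar x)"
| "inst \<gamma> (ECon c) = ECon c"
| "inst \<gamma> (EFun f) = EFun f"
| "inst \<gamma> (EIf a b c) = EIf (inst \<gamma> a) (inst \<gamma> b) (inst \<gamma> c)"
| "inst \<gamma> (EChoose ss) = EChoose (map (inst \<gamma>) ss)"
| "inst \<gamma> (EPair a b) = EPair (inst \<gamma> a) (inst \<gamma> b)"
| "inst \<gamma> (EApp a b) = EApp (inst \<gamma> a) (inst \<gamma> b)"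

datatype ('v, 'c, 'f) clause =
  Clause (chead: 'f) (cargs: "('v, 'c, 'f) expr list") (crhs: "('v, 'c, 'f) expr")

type_synonym ('v, 'c, 'f) prog = "('v, 'c, 'f) clause list"

definition lhs_vars :: "('v, 'c, 'f) clause \<Rightarrow> 'v set" where
  "lhs_vars cl = set (concat (map varlist (cargs cl)))"

definition main_fun :: "('v, 'c, 'f) prog \<Rightarrow> 'f" where
  "main_fun p = chead (hd p)"

definition arity :: "('v, 'c, 'f) prog \<Rightarrow> 'f \<Rightarrow> nat" where
  "arity p f = (case find (\<lambda>cl. chead cl = f) p of Some cl \<Rightarrow> length (cargs cl) | None \<Rightarrow> 0)"

inductive typed :: "('c cname \<Rightarrow> 's ty) \<Rightarrow> ('f \<Rightarrow> 's ty) \<Rightarrow> ('v \<Rightarrow> 's ty option)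
    \<Rightarrow> ('v, 'c, 'f) expr \<Rightarrow> 's ty \<Rightarrow> bool"
  for Fc Ff where
  t_var: "\<Gamma> x = Some \<sigma> \<Longrightarrow> typed Fc Ff \<Gamma> (EVar x) \<sigma>"
| t_con: "typed Fc Ff \<Gamma> (ECon c) (Fc c)"
| t_fun: "typed Fc Ff \<Gamma> (EFun f) (Ff f)"
| t_if: "typed Fc Ff \<Gamma> a TBool \<Longrightarrow> typed Fc Ff \<Gamma> b \<sigma> \<Longrightarrow> typed Fc Ff \<Gamma> c \<sigma>
          \<Longrightarrow> typed Fc Ff \<Gamma> (EIf a b c) \<sigma>"
| t_choose: "\<forall>s\<in>set ss. typed Fc Ff \<Gamma> s \<sigma> \<Longrightarrow> typed Fc Ff \<Gamma> (EChoose ss) \<sigma>"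
| t_pair: "typed Fc Ff \<Gamma> a \<sigma> \<Longrightarrow> typed Fc Ff \<Gamma> b \<tau> \<Longrightarrow> typed Fc Ff \<Gamma> (EPair a b) (TProd \<sigma> \<tau>)"
| t_app: "typed Fc Ff \<Gamma> a (TArr \<sigma> \<tau>) \<Longrightarrow> typed Fc Ff \<Gamma> b \<sigma> \<Longrightarrow> typed Fc Ff \<Gamma> (EApp a b) \<tau>"

definition well_typed_with :: "'s set \<Rightarrow> ('c cname \<Rightarrow> 's ty) \<Rightarrow> ('f \<Rightarrow> 's ty)
    \<Rightarrow> ('v, 'c, 'f) prog \<Rightarrow> bool" where
  "well_typed_with S Fc Ff p =
    (p \<noteq> [] \<and>
     (\<forall>c. ty_over S (Fc c)) \<and> (\<forall>f. ty_over S (Ff f)) \<and>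
     (\<forall>k\<in>set (fst (strip_arr (Ff (main_fun p)))). ord k = 0) \<and>
     ord (snd (strip_arr (Ff (main_fun p)))) = 0 \<and>
     (\<forall>c. (\<forall>k\<in>set (fst (strip_arr (Fc c))). ord k = 0) \<and> is_sort (snd (strip_arr (Fc c)))) \<and>
     Fc CTrue = TBool \<and> Fc CFalse = TBool \<and>
     (\<forall>cl\<in>set p.
        (\<forall>l\<in>set (cargs cl). is_pattern l) \<and>
        set (varlist (crhs cl)) \<subseteq> lhs_vars cl \<and>
        distinct (concat (map varlist (cargs cl))) \<and>
        (\<exists>\<Gamma> \<sigma>. dom \<Gamma> = lhs_vars cl \<and> (\<forall>x \<tau>. \<Gamma> x = Some \<tau> \<longrightarrow> ty_over S \<tau>) \<and>
               typed Fc Ff \<Gamma> (apps (EFun (chead cl)) (cargs cl)) \<sigma> \<and>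
               typed Fc Ff \<Gamma> (crhs cl) \<sigma>)))"

text \<open>fully_applied ar e k: every constructor occurrence in e is applied to
  exactly its number of arguments, where e itself is applied to k arguments.\<close>
fun fully_applied :: "('c cname \<Rightarrow> nat) \<Rightarrow> ('v, 'c, 'f) expr \<Rightarrow> nat \<Rightarrow> bool" where
  "fully_applied ar (ECon c) k = (k = ar c)"
| "fully_applied ar (EVar x) k = True"
| "fully_applied ar (EFun f) k = True"
| "fully_applied ar (EApp a b) k = (fully_applied ar a (Suc k) \<and> fully_applied ar b 0)"
| "fully_applied ar (EIf a b c) k =
     (fully_applied ar a 0 \<and> fully_applied ar b 0 \<and> fully_applied ar c 0)"
| "fully_applied ar (EChoose ss) k = (\<forall>s\<in>set ss. fully_applied ar s 0)"
| "fully_applied ar (EPair a b) k = (fully_applied ar a 0 \<and> fully_applied ar b 0)"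

definition well_formed :: "'s set \<Rightarrow> ('v, 'c, 'f) prog \<Rightarrow> bool" where
  "well_formed S p =
    (\<exists>Fc Ff. well_typed_with S Fc Ff p \<and>
       (\<forall>cl\<in>set p.
          (\<forall>l\<in>set (cargs cl). fully_applied (\<lambda>c. length (fst (strip_arr (Fc c)))) l 0) \<and>
          fully_applied (\<lambda>c. length (fst (strip_arr (Fc c)))) (crhs cl) 0) \<and>
       (\<forall>cl1\<in>set p. \<forall>cl2\<in>set p. chead cl1 = chead cl2 \<longrightarrow>
          length (cargs cl1) = length (cargs cl2)))"

definition cons_free_clause :: "('v, 'c, 'f) clause \<Rightarrow> bool" where
  "cons_free_clause cl =
    (\<forall>t. sube (crhs cl) t \<longrightarrow> (\<exists>c ss. t = apps (ECon c) ss) \<longrightarrow>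
         is_data t \<or> (\<exists>l\<in>set (cargs cl). sube l t))"

definition cons_free :: "('v, 'c, 'f) prog \<Rightarrow> bool" where
  "cons_free p = (\<forall>cl\<in>set p. cons_free_clause cl)"

datatype ('v, 'c, 'f) judg =
    JEval "('v, 'c, 'f) env" "('v, 'c, 'f) expr" "('v, 'c, 'f) expr"
  | JIf "('v, 'c, 'f) env" "('v, 'c, 'f) expr" "('v, 'c, 'f) expr" "('v, 'c, 'f) expr" "('v, 'c, 'f) expr"
  | JCall 'f "('v, 'c, 'f) expr list" "('v, 'c, 'f) expr"

definition matches :: "('v, 'c, 'f) clause \<Rightarrow> 'f \<Rightarrow> ('v, 'c, 'f) expr list \<Rightarrow> bool" where
  "matches cl f vs = (chead cl = f \<and>
     (\<exists>\<gamma>. dom \<gamma> = lhs_vars cl \<and> vs = map (inst \<gamma>) (cargs cl)))"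

definition first_match :: "('v, 'c, 'f) prog \<Rightarrow> 'f \<Rightarrow> ('v, 'c, 'f) expr list \<Rightarrow> nat \<Rightarrow> bool" where
  "first_match p f vs i = (i < length p \<and> matches (p ! i) f vs \<and> (\<forall>j<i. \<not> matches (p ! j) f vs))"

inductive rule_inst :: "('v, 'c, 'f) prog \<Rightarrow> ('v, 'c, 'f) judg \<Rightarrow> ('v, 'c, 'f) judg list \<Rightarrow> bool"
  for p where
  r_var: "\<gamma> x = Some w \<Longrightarrow> rule_inst p (JEval \<gamma> (EVar x) w) []"
| r_fun: "rule_inst p (JEval \<gamma> (EFun f) w) [JCall f [] w]"
| r_con: "length ss = length bs \<Longrightarrow>
    rule_inst p (JEval \<gamma> (apps (ECon c) ss) (apps (ECon c) bs)) (map2 (JEval \<gamma>) ss bs)"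
| r_pair: "rule_inst p (JEval \<gamma> (EPair s t) (EPair v w)) [JEval \<gamma> s v, JEval \<gamma> t w]"
| r_choose: "i < length ss \<Longrightarrow> rule_inst p (JEval \<gamma> (EChoose ss) w) [JEval \<gamma> (ss ! i) w]"
| r_if: "rule_inst p (JEval \<gamma> (EIf s1 s2 s3) w) [JEval \<gamma> s1 d, JIf \<gamma> d s2 s3 w]"
| r_if_true: "rule_inst p (JIf \<gamma> (ECon CTrue) s2 s3 w) [JEval \<gamma> s2 w]"
| r_if_false: "rule_inst p (JIf \<gamma> (ECon CFalse) s2 s3 w) [JEval \<gamma> s3 w]"
| r_app: "rule_inst p (JEval \<gamma> (EApp s t) w)
    [JEval \<gamma> s (apps (EFun f) vs), JEval \<gamma> t v, JCall f (vs @ [v]) w]"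
| r_partial: "length vs < arity p f \<Longrightarrow> rule_inst p (JCall f vs (apps (EFun f) vs)) []"
| r_clause: "first_match p f vs i \<Longrightarrow> dom \<gamma> = lhs_vars (p ! i) \<Longrightarrow>
    vs = map (inst \<gamma>) (cargs (p ! i)) \<Longrightarrow>
    rule_inst p (JCall f vs w) [JEval \<gamma> (crhs (p ! i)) w]"

datatype ('v, 'c, 'f) dtree = DNode "('v, 'c, 'f) judg" "('v, 'c, 'f) dtree list"

fun droot :: "('v, 'c, 'f) dtree \<Rightarrow> ('v, 'c, 'f) judg" where
  "droot (DNode J ts) = J"

fun valid_tree :: "('v, 'c, 'f) prog \<Rightarrow> ('v, 'c, 'f) dtree \<Rightarrow> bool" where
  "valid_tree p (DNode J ts) = (rule_inst p J (map droot ts) \<and> (\<forall>t\<in>set ts. valid_tree p t))"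

fun tree_judgs :: "('v, 'c, 'f) dtree \<Rightarrow> ('v, 'c, 'f) judg set" where
  "tree_judgs (DNode J ts) = insert J (\<Union>t\<in>set ts. tree_judgs t)"

definition sem_tree :: "('v, 'c, 'f) prog \<Rightarrow> 'v list \<Rightarrow> ('v, 'c, 'f) expr list
    \<Rightarrow> ('v, 'c, 'f) expr \<Rightarrow> ('v, 'c, 'f) dtree \<Rightarrow> bool" where
  "sem_tree p xs ds b T =
    (valid_tree p T \<and>
     droot T = JEval (map_of (zip xs ds)) (apps (EFun (main_fun p)) (map EVar xs)) b)"

definition B_set :: "('v, 'c, 'f) prog \<Rightarrow> ('v, 'c, 'f) expr list \<Rightarrow> ('v, 'c, 'f) expr set" where
  "B_set p ds = {d. is_data d \<and> ((\<exists>di\<in>set ds. sube di d) \<or> (\<exists>cl\<in>set p. sube (crhs cl) d))}"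

fun judg_rel :: "('v, 'c, 'f) judg \<Rightarrow> ('v, 'c, 'f) expr \<Rightarrow> bool" where
  "judg_rel (JEval \<gamma> s w) t = (sube w t \<or> (\<exists>x v. \<gamma> x = Some v \<and> sube v t))"
| "judg_rel (JIf \<gamma> b' s1 s2 w) t =
     (sube w t \<or> sube b' t \<or> (\<exists>x v. \<gamma> x = Some v \<and> sube v t))"
| "judg_rel (JCall f vs w) t = (sube w t \<or> (\<exists>v\<in>set vs. sube v t))"

end

theory Submission
  imports Defs
begin

text \<open>Every constructor term met during evaluation is either copied from the input data, or
  written down literally on a right-hand side as a data expression, or already present in a
  value bound to a pattern variable: cons-freeness forbids building any other constructor term.
  The invariant carried down the derivation tree is therefore that all constructor-headed
  sub-expressions of the environments and arguments lie in a fixed set \<open>B\<close>, and that every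
  constructor-headed sub-expression of the expression being evaluated is either a data
  expression in \<open>B\<close> or a pattern whose instance is bounded by \<open>B\<close>. Such a sub-expression
  evaluates to exactly that instance, so the results stay bounded as well.\<close>

fun expr_head :: "('v, 'c, 'f) expr \<Rightarrow> ('v, 'c, 'f) expr" where
  "expr_head (EApp a b) = expr_head a"
| "expr_head e = e"

lemma apps_Nil [simp]: "apps h [] = h"
  by (simp add: apps_def)

lemma apps_snoc [simp]: "apps h (xs @ [x]) = EApp (apps h xs) x"
  by (simp add: apps_def)

lemma expr_head_apps [simp]: "expr_head (apps h xs) = expr_head h"
  by (induction xs rule: rev_induct) auto

lemma apps_ECon_eq_iff: "apps (ECon c) xs = apps (ECon c') ys \<longleftrightarrow> c = c' \<and> xs = ys"
proof (induction xs arbitrary: ys rule: rev_induct)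
  case Nil
  then show ?case by (cases ys rule: rev_cases) auto
next
  case (snoc x xs)
  then show ?case by (cases ys rule: rev_cases) auto
qed

lemma apps_ECon_neq [simp]:
  "apps (ECon c) ts \<noteq> EVar x" "apps (ECon c) ts \<noteq> EFun f" "apps (ECon c) ts \<noteq> EPair a b"
  "apps (ECon c) ts \<noteq> EIf a b d" "apps (ECon c) ts \<noteq> EChoose ss"
  "apps (ECon c) ts \<noteq> apps (EFun f) vs"
  by (auto dest: arg_cong[where f = expr_head])

lemmas apps_ECon_neq_sym [simp] = apps_ECon_neq[THEN not_sym]

lemma inst_apps [simp]: "inst \<gamma> (apps h xs) = apps (inst \<gamma> h) (map (inst \<gamma>) xs)"
  by (induction xs rule: rev_induct) auto

lemma varlist_apps [simp]: "varlist (apps h xs) = varlist h @ concat (map varlist xs)"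
  by (induction xs rule: rev_induct) auto

lemma psub_apps: "psub (apps h xs) t \<longleftrightarrow> psub h t \<or> (\<exists>x\<in>set xs. sube x t)"
  by (induction xs rule: rev_induct) (auto simp: sube_def)

lemma psub_trans: "psub a b \<Longrightarrow> psub b c \<Longrightarrow> psub a c"
  by (induction a b rule: psub.induct) auto

lemma sube_trans: "sube a b \<Longrightarrow> sube b c \<Longrightarrow> sube a c"
  unfolding sube_def using psub_trans by blast

lemma psub_inst: "psub e t \<Longrightarrow> psub (inst \<gamma> e) (inst \<gamma> t)"
  by (induction e t rule: psub.induct) auto

lemma sube_inst: "sube e t \<Longrightarrow> sube (inst \<gamma> e) (inst \<gamma> t)"
  unfolding sube_def using psub_inst by blast

lemma is_pattern_sube: "is_pattern l \<Longrightarrow> sube l t \<Longrightarrow> is_pattern t"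
  by (induction l rule: is_pattern.induct) (auto simp: psub_apps sube_def intro: is_pattern.intros)

lemma is_data_sube: "is_data d \<Longrightarrow> sube d t \<Longrightarrow> is_data t"
  by (induction d rule: is_data.induct) (auto simp: psub_apps sube_def intro: is_data.intros)

lemma is_pattern_sube_var: "is_pattern l \<Longrightarrow> x \<in> set (varlist l) \<Longrightarrow> sube l (EVar x)"
  by (induction l rule: is_pattern.induct) (auto simp: psub_apps sube_def)

lemma inst_data: "is_data d \<Longrightarrow> inst \<gamma> d = d"
  by (induction d rule: is_data.induct) (simp_all add: map_idI)

inductive is_skeleton :: "('v, 'c, 'f) expr \<Rightarrow> bool" where
  skeleton_var: "is_skeleton (EVar x)"
| skeleton_con: "\<forall>e\<in>set es. is_skeleton e \<Longrightarrow> is_skeleton (apps (ECon c) es)"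
| skeleton_pair: "is_skeleton a \<Longrightarrow> is_skeleton b \<Longrightarrow> is_skeleton (EPair a b)"

lemma is_pattern_skeleton: "is_pattern l \<Longrightarrow> is_skeleton l"
  by (induction rule: is_pattern.induct) (auto intro: is_skeleton.intros)

lemma is_data_skeleton: "is_data d \<Longrightarrow> is_skeleton d"
  by (induction rule: is_data.induct) (auto intro: is_skeleton.intros)

lemma not_is_skeleton [simp]:
  "\<not> is_skeleton (EFun f)" "\<not> is_skeleton (EChoose ss)" "\<not> is_skeleton (EIf a b c)"
  by (auto elim: is_skeleton.cases)

lemma is_skeleton_EApp: "is_skeleton (EApp s t) \<Longrightarrow> \<exists>c. expr_head s = ECon c"
  by (cases rule: is_skeleton.cases) (auto dest: arg_cong[where f = expr_head])

lemma is_skeleton_apps_ECon: "is_skeleton (apps (ECon c) es) \<Longrightarrow> \<forall>e\<in>set es. is_skeleton e"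
  by (cases rule: is_skeleton.cases) (auto simp: apps_ECon_eq_iff)

lemma is_skeleton_EPair: "is_skeleton (EPair a b) \<Longrightarrow> is_skeleton a \<and> is_skeleton b"
  by (cases rule: is_skeleton.cases) auto

inductive derivable :: "('v, 'c, 'f) prog \<Rightarrow> ('v, 'c, 'f) judg \<Rightarrow> bool" for p where
  derivableI: "rule_inst p J Js \<Longrightarrow> \<forall>J'\<in>set Js. derivable p J' \<Longrightarrow> derivable p J"

lemma valid_tree_derivable: "valid_tree p T \<Longrightarrow> derivable p (droot T)"
proof (induction T)
  case (DNode J ts)
  then show ?case by (auto intro!: derivableI[of p J "map droot ts"])
qed

lemma droot_in_tree_judgs: "droot T \<in> tree_judgs T"
  by (cases T) simp

lemma derivable_eval_con_head:
  "derivable p J \<Longrightarrow> J = JEval \<gamma> e w \<Longrightarrow> expr_head e = ECon c \<Longrightarrow> expr_head w = ECon c"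
proof (induction arbitrary: e w rule: derivable.induct)
  case (derivableI J Js)
  from \<open>rule_inst p J Js\<close> show ?case
  proof cases
    case (r_app \<gamma>' s t w' f vs v)
    with derivableI.IH derivableI.prems have "expr_head (apps (EFun f) vs) = ECon c" by auto
    then show ?thesis by simp
  qed (use derivableI.prems in auto)
qed

lemma derivable_eval_skeleton:
  "derivable p J \<Longrightarrow> J = JEval \<gamma> e w \<Longrightarrow> is_skeleton e \<Longrightarrow> w = inst \<gamma> e"
proof (induction arbitrary: e w rule: derivable.induct)
  case (derivableI J Js)
  from \<open>rule_inst p J Js\<close> show ?case
  proof cases
    case (r_con ss bs \<gamma>' c)
    have "bs ! i = inst \<gamma> (ss ! i)" if "i < length ss" for i
    proof -
      have "JEval \<gamma> (ss ! i) (bs ! i) \<in> set Js"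
        using r_con derivableI.prems that by (auto simp: set_conv_nth intro!: exI[of _ i])
      moreover have "is_skeleton (ss ! i)"
        using is_skeleton_apps_ECon[of c ss] derivableI.prems r_con that by simp
      ultimately show ?thesis using derivableI.IH by blast
    qed
    then have "bs = map (inst \<gamma>) ss"
      using \<open>length ss = length bs\<close> by (simp add: nth_equalityI)
    then show ?thesis using r_con derivableI.prems by simp
  next
    case (r_pair \<gamma>' s t v w')
    then show ?thesis using derivableI.IH derivableI.prems is_skeleton_EPair by auto
  next
    case (r_app \<gamma>' s t w' f vs v)
    then obtain c where "expr_head s = ECon c"
      using derivableI.prems is_skeleton_EApp by auto
    moreover have "derivable p (JEval \<gamma>' s (apps (EFun f) vs))"
      using derivableI.IH r_app by simp
    ultimately have "expr_head (apps (EFun f) vs) = ECon c"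
      using derivable_eval_con_head by blast
    then show ?thesis by simp
  qed (use derivableI.prems in auto)
qed

definition con_subexprs :: "('v, 'c, 'f) expr \<Rightarrow> ('v, 'c, 'f) expr set" where
  "con_subexprs e = {t. sube e t \<and> (\<exists>c ts. t = apps (ECon c) ts)}"

lemma con_subexprs_mono: "sube e e' \<Longrightarrow> con_subexprs e' \<subseteq> con_subexprs e"
  unfolding con_subexprs_def using sube_trans by blast

lemma con_subexprs_EVar [simp]: "con_subexprs (EVar x) = {}"
  by (auto simp: con_subexprs_def sube_def)

lemma con_subexprs_EPair: "con_subexprs (EPair a b) = con_subexprs a \<union> con_subexprs b"
  by (auto simp: con_subexprs_def sube_def)

lemma con_subexprs_apps_EFun:
  "con_subexprs (apps (EFun f) vs) = (\<Union>v\<in>set vs. con_subexprs v)"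
  by (auto simp: con_subexprs_def sube_def psub_apps)

lemma con_subexprs_apps_ECon:
  "con_subexprs (apps (ECon c) vs) = insert (apps (ECon c) vs) (\<Union>v\<in>set vs. con_subexprs v)"
  by (auto simp: con_subexprs_def sube_def psub_apps)

lemma con_subexprs_EApp:
  "(\<And>c. expr_head s \<noteq> ECon c) \<Longrightarrow> con_subexprs s \<subseteq> con_subexprs (EApp s t)"
  by (fastforce simp: con_subexprs_def sube_def)

definition bounded_env ::
    "('v, 'c, 'f) expr set \<Rightarrow> ('v, 'c, 'f) env \<Rightarrow> bool" where
  "bounded_env B \<gamma> \<longleftrightarrow> (\<forall>v\<in>ran \<gamma>. con_subexprs v \<subseteq> B)"

definition con_safe ::
    "('v, 'c, 'f) expr set \<Rightarrow> ('v, 'c, 'f) env \<Rightarrow> ('v, 'c, 'f) expr \<Rightarrow> bool" where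
  "con_safe B \<gamma> s \<longleftrightarrow> (\<forall>t\<in>con_subexprs s.
     is_data t \<and> t \<in> B \<or> is_pattern t \<and> con_subexprs (inst \<gamma> t) \<subseteq> B)"

fun judg_pre :: "('v, 'c, 'f) expr set \<Rightarrow> ('v, 'c, 'f) judg \<Rightarrow> bool" where
  "judg_pre B (JEval \<gamma> s w) \<longleftrightarrow> bounded_env B \<gamma> \<and> con_safe B \<gamma> s"
| "judg_pre B (JIf \<gamma> d s2 s3 w) \<longleftrightarrow>
     bounded_env B \<gamma> \<and> con_subexprs d \<subseteq> B \<and> con_safe B \<gamma> s2 \<and> con_safe B \<gamma> s3"
| "judg_pre B (JCall f vs w) \<longleftrightarrow> (\<forall>v\<in>set vs. con_subexprs v \<subseteq> B)"

fun judg_result :: "('v, 'c, 'f) judg \<Rightarrow> ('v, 'c, 'f) expr" where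
  "judg_result (JEval \<gamma> s w) = w"
| "judg_result (JIf \<gamma> d s2 s3 w) = w"
| "judg_result (JCall f vs w) = w"

lemma con_safe_mono: "con_safe B \<gamma> e \<Longrightarrow> con_subexprs e' \<subseteq> con_subexprs e \<Longrightarrow> con_safe B \<gamma> e'"
  unfolding con_safe_def by blast

lemma con_safe_sube: "con_safe B \<gamma> e \<Longrightarrow> sube e e' \<Longrightarrow> con_safe B \<gamma> e'"
  using con_safe_mono con_subexprs_mono by blast

lemma derivable_eval_con_bounded:
  assumes "derivable p (JEval \<gamma> (apps (ECon c) ss) w)" and "con_safe B \<gamma> (apps (ECon c) ss)"
  shows "w \<in> B"
proof -
  let ?e = "apps (ECon c) ss"
  have "?e \<in> con_subexprs ?e" by (simp add: con_subexprs_apps_ECon)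
  with assms(2) consider (data) "is_data ?e" "?e \<in> B"
    | (pattern) "is_pattern ?e" "con_subexprs (inst \<gamma> ?e) \<subseteq> B"
    unfolding con_safe_def by blast
  then show ?thesis
  proof cases
    case data
    then have "w = ?e"
      using derivable_eval_skeleton[OF assms(1) refl] is_data_skeleton inst_data by metis
    with data show ?thesis by simp
  next
    case pattern
    then have "w = inst \<gamma> ?e"
      using derivable_eval_skeleton[OF assms(1) refl] is_pattern_skeleton by blast
    with pattern show ?thesis by (simp add: con_subexprs_apps_ECon)
  qed
qed

lemma con_safe_app_head:
  assumes "derivable p (JEval \<gamma> s (apps (EFun f) vs))" and "con_safe B \<gamma> (EApp s t)"
  shows "con_safe B \<gamma> s"
proof -
  have "expr_head s \<noteq> ECon c" for c
    using derivable_eval_con_head[OF assms(1) refl] by auto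
  then have "con_subexprs s \<subseteq> con_subexprs (EApp s t)" by (rule con_subexprs_EApp)
  with assms(2) show ?thesis by (rule con_safe_mono)
qed

lemma clause_env_bounded:
  assumes "\<forall>l\<in>set (cargs cl). is_pattern l" and "dom \<gamma> = lhs_vars cl"
    and "\<forall>l\<in>set (cargs cl). con_subexprs (inst \<gamma> l) \<subseteq> B"
  shows "bounded_env B \<gamma>"
  unfolding bounded_env_def
proof
  fix u assume "u \<in> ran \<gamma>"
  then obtain x where x: "\<gamma> x = Some u" by (auto simp: ran_def)
  then have "x \<in> lhs_vars cl" using assms(2)[symmetric] by auto
  then obtain l where l: "l \<in> set (cargs cl)" "x \<in> set (varlist l)"
    unfolding lhs_vars_def set_concat set_map by blast
  have "is_pattern l" using assms(1) l(1) by blast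
  then have "sube l (EVar x)" using l(2) by (rule is_pattern_sube_var)
  then have "sube (inst \<gamma> l) u" using sube_inst[of l "EVar x" \<gamma>] x by simp
  then have "con_subexprs u \<subseteq> con_subexprs (inst \<gamma> l)" by (rule con_subexprs_mono)
  then show "con_subexprs u \<subseteq> B" using assms(3) l(1) by blast
qed

lemma clause_rhs_con_safe:
  assumes "\<forall>l\<in>set (cargs cl). is_pattern l" and "cons_free_clause cl"
    and "\<forall>d. is_data d \<longrightarrow> sube (crhs cl) d \<longrightarrow> d \<in> B"
    and "\<forall>l\<in>set (cargs cl). con_subexprs (inst \<gamma> l) \<subseteq> B"
  shows "con_safe B \<gamma> (crhs cl)"
  unfolding con_safe_def
proof
  fix t assume t: "t \<in> con_subexprs (crhs cl)"
  then have "is_data t \<or> (\<exists>l\<in>set (cargs cl). sube l t)"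
    using assms(2) by (auto simp: cons_free_clause_def con_subexprs_def)
  then show "is_data t \<and> t \<in> B \<or> is_pattern t \<and> con_subexprs (inst \<gamma> t) \<subseteq> B"
  proof
    assume "is_data t"
    then show ?thesis using t assms(3) by (auto simp: con_subexprs_def)
  next
    assume "\<exists>l\<in>set (cargs cl). sube l t"
    then obtain l where "l \<in> set (cargs cl)" "sube l t" by blast
    then show ?thesis
      using assms(1,4) is_pattern_sube sube_inst con_subexprs_mono by blast
  qed
qed

context
  fixes p :: "('v, 'c, 'f) prog" and B :: "('v, 'c, 'f) expr set"
  assumes patterns: "\<forall>cl\<in>set p. \<forall>l\<in>set (cargs cl). is_pattern l"
    and cons_free: "cons_free p"
    and rhs_data: "\<forall>cl\<in>set p. \<forall>d. is_data d \<longrightarrow> sube (crhs cl) d \<longrightarrow> d \<in> B"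
begin

lemma clause_entry_pre:
  assumes "first_match p f vs i" and "dom \<gamma> = lhs_vars (p ! i)"
    and "vs = map (inst \<gamma>) (cargs (p ! i))" and "\<forall>v\<in>set vs. con_subexprs v \<subseteq> B"
  shows "judg_pre B (JEval \<gamma> (crhs (p ! i)) w)"
proof -
  have cl: "p ! i \<in> set p" using assms(1) by (simp add: first_match_def)
  have pats: "\<forall>l\<in>set (cargs (p ! i)). is_pattern l" using patterns cl by blast
  have args: "\<forall>l\<in>set (cargs (p ! i)). con_subexprs (inst \<gamma> l) \<subseteq> B"
    using assms(3,4) by simp
  have "bounded_env B \<gamma>"
    using clause_env_bounded[OF pats assms(2) args] .
  moreover have "con_safe B \<gamma> (crhs (p ! i))"
    using clause_rhs_con_safe[OF pats _ _ args] cons_free rhs_data cl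
    by (simp add: cons_free_def)
  ultimately show ?thesis by simp
qed

lemma rule_inst_bounded:
  assumes rule: "rule_inst p J Js" and derivable: "\<forall>J'\<in>set Js. derivable p J'"
    and pre: "judg_pre B J"
    and IH: "\<And>J'. J' \<in> set Js \<Longrightarrow> judg_pre B J' \<Longrightarrow> con_subexprs (judg_result J') \<subseteq> B"
  shows "(\<forall>J'\<in>set Js. judg_pre B J') \<and> con_subexprs (judg_result J) \<subseteq> B"
  using rule
proof cases
  case (r_var \<gamma> x w)
  then show ?thesis using pre by (auto simp: bounded_env_def ran_def)
next
  case (r_con ss bs \<gamma> c)
  have "con_safe B \<gamma> s" if "s \<in> set ss" for s
  proof -
    have "sube (apps (ECon c) ss) s" using that by (auto simp: sube_def psub_apps)
    then show ?thesis using con_safe_sube pre r_con by auto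
  qed
  then have pres: "\<forall>J'\<in>set Js. judg_pre B J'"
    using r_con pre by (auto dest: set_zip_leftD)
  have "con_subexprs b \<subseteq> B" if b: "b \<in> set bs" for b
  proof -
    obtain s where "(s, b) \<in> set (zip ss bs)"
      by (rule in_set_impl_in_set_zip2[OF \<open>length ss = length bs\<close> b])
    then show ?thesis using IH pres r_con by force
  qed
  moreover have "apps (ECon c) bs \<in> B"
    using derivable_eval_con_bounded derivableI[OF rule derivable] r_con pre by auto
  ultimately show ?thesis using pres r_con by (auto simp: con_subexprs_apps_ECon)
next
  case (r_pair \<gamma> s t v w)
  then have "judg_pre B (JEval \<gamma> s v)" "judg_pre B (JEval \<gamma> t w)"
    using pre con_safe_sube[of B \<gamma> "EPair s t"] by (auto simp: sube_def)
  then show ?thesis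
    using r_pair IH[of "JEval \<gamma> s v"] IH[of "JEval \<gamma> t w"] by (auto simp: con_subexprs_EPair)
next
  case (r_choose i ss \<gamma> w)
  then have "judg_pre B (JEval \<gamma> (ss ! i) w)"
    using pre con_safe_sube[of B \<gamma> "EChoose ss" "ss ! i"] nth_mem by (fastforce simp: sube_def)
  then show ?thesis using r_choose IH[of "JEval \<gamma> (ss ! i) w"] by auto
next
  case (r_if \<gamma> s1 s2 s3 w d)
  then have cond: "judg_pre B (JEval \<gamma> s1 d)"
    using pre con_safe_sube[of B \<gamma> "EIf s1 s2 s3"] by (auto simp: sube_def)
  then have "judg_pre B (JIf \<gamma> d s2 s3 w)"
    using r_if pre IH[of "JEval \<gamma> s1 d"] con_safe_sube[of B \<gamma> "EIf s1 s2 s3"]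
    by (auto simp: sube_def)
  then show ?thesis using r_if cond IH[of "JIf \<gamma> d s2 s3 w"] by auto
next
  case (r_app \<gamma> s t w f vs v)
  have head: "judg_pre B (JEval \<gamma> s (apps (EFun f) vs))"
    using con_safe_app_head[of p \<gamma> s f vs B t] derivable pre r_app by auto
  have arg: "judg_pre B (JEval \<gamma> t v)"
    using pre r_app con_safe_sube[of B \<gamma> "EApp s t" t] by (simp add: sube_def)
  have "judg_pre B (JCall f (vs @ [v]) w)"
    using r_app IH[of "JEval \<gamma> s (apps (EFun f) vs)"] IH[of "JEval \<gamma> t v"] head arg
    by (auto simp: con_subexprs_apps_EFun)
  then show ?thesis using r_app head arg IH[of "JCall f (vs @ [v]) w"] by auto
next
  case (r_clause f vs i \<gamma> w)
  then have "judg_pre B (JEval \<gamma> (crhs (p ! i)) w)"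
    using clause_entry_pre pre by simp
  then show ?thesis using r_clause IH[of "JEval \<gamma> (crhs (p ! i)) w"] by auto
qed (use pre IH in \<open>auto simp: con_subexprs_apps_EFun\<close>)

lemma valid_tree_bounded:
  "valid_tree p T \<Longrightarrow> judg_pre B (droot T) \<Longrightarrow>
    \<forall>J\<in>tree_judgs T. judg_pre B J \<and> con_subexprs (judg_result J) \<subseteq> B"
proof (induction T)
  case (DNode J ts)
  have "(\<forall>J'\<in>set (map droot ts). judg_pre B J') \<and> con_subexprs (judg_result J) \<subseteq> B"
  proof (rule rule_inst_bounded)
    show "rule_inst p J (map droot ts)" and "\<forall>J'\<in>set (map droot ts). derivable p J'"
      using DNode.prems(1) valid_tree_derivable by auto
    show "judg_pre B J" using DNode.prems(2) by simp
    show "con_subexprs (judg_result J') \<subseteq> B"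
      if "J' \<in> set (map droot ts)" "judg_pre B J'" for J'
      using that DNode.IH DNode.prems(1) droot_in_tree_judgs by fastforce
  qed
  with DNode show ?case by fastforce
qed

end

lemma judg_rel_con_in:
  assumes "judg_pre B J" and "con_subexprs (judg_result J) \<subseteq> B"
    and "judg_rel J t" and "t = apps (ECon c) args"
  shows "t \<in> B"
proof -
  have "t \<in> con_subexprs e" if "sube e t" for e
    using that assms(4) by (auto simp: con_subexprs_def)
  with assms show ?thesis
    by (cases J) (auto simp: bounded_env_def ran_def)
qed

lemma bounded_env_input:
  assumes "\<forall>d\<in>set ds. is_data d"
  shows "bounded_env (B_set p ds) (map_of (zip xs ds))"
  unfolding bounded_env_def
proof
  fix v assume "v \<in> ran (map_of (zip xs ds))"
  then have "v \<in> set ds" by (auto simp: ran_def dest: map_of_SomeD set_zip_rightD)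
  then show "con_subexprs v \<subseteq> B_set p ds"
    using assms is_data_sube by (fastforce simp: B_set_def con_subexprs_def)
qed

lemma well_formed_patterns:
  "well_formed S p \<Longrightarrow> \<forall>cl\<in>set p. \<forall>l\<in>set (cargs cl). is_pattern l"
  unfolding well_formed_def well_typed_with_def by blast

theorem lemma2:
  fixes S :: "'s set" and p :: "('v, 'c, 'f) prog"
    and xs :: "'v list" and ds :: "('v, 'c, 'f) expr list"
  assumes "finite S"
    and "well_formed S p"
    and "cons_free p"
    and "distinct xs" and "length xs = length ds"
    and "\<forall>d\<in>set ds. is_data d"
    and "sem_tree p xs ds b T"
    and "J \<in> tree_judgs T"
    and "judg_rel J t"
    and "t = apps (ECon c) args"
  shows "t \<in> B_set p ds"
proof -
  have "judg_pre (B_set p ds) (droot T)"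
    using bounded_env_input[OF assms(6)] assms(7)
    by (simp add: sem_tree_def con_safe_def con_subexprs_apps_EFun)
  moreover have "\<forall>cl\<in>set p. \<forall>d. is_data d \<longrightarrow> sube (crhs cl) d \<longrightarrow> d \<in> B_set p ds"
    by (auto simp: B_set_def)
  ultimately have "judg_pre (B_set p ds) J \<and> con_subexprs (judg_result J) \<subseteq> B_set p ds"
    using valid_tree_bounded[OF well_formed_patterns[OF assms(2)] assms(3), of "B_set p ds" T]
      assms(7,8) by (simp add: sem_tree_def)
  then show ?thesis using judg_rel_con_in assms(9,10) by blast
qed

end
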